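(* Let $\varepsilon\in(0,\tfrac12)$ and let $W_n=W_n^{\varepsilon}$ be the weighted diamonds defined below. Then there is a constant $C(\varepsilon)<\infty$ such that for every $n\ge 0$ the metric space $V(W_n)$ (with weighted shortest path distance) admits a bilipschitz embedding into $\ell_2$ with distortion at most $C(\varepsilon)$.
   Context: Diamonds: $D_0$ is an edge; $D_i$ is obtained from $D_{i-1}$ by replacing each edge $uv$ by a quadrilateral $u,a,v,b$ (so $V(D_{i-1})\subseteq V(D_i)$ and the edges of $D_{i-1}$ are not edges of $D_i$). Weighted diamonds: $W_0=D_0$ with its edge of weight $1$; for $n\ge1$, $W_n$ has vertex set $V(D_n)$ and edge set $E(W_{n-1})\cup E(D_n)$, where edges of $W_{n-1}$ keep their weights and each edge of $D_n$ gets weight $(\tfrac12+\varepsilon)^n$. Thus $W_n$ has all edges of $D_0,D_1,\dots,D_n$, the edges of $D_j$ having weight $(\tfrac12+\varepsilon)^j$. $W_n$ carries the weighted shortest path metric. *)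

theory Defs
  imports "HOL-Analysis.Analysis"
begin

text \<open>An edge of D_j is addressed by a word of length j over {0,1,2,3}, most
  recent refinement digit first.  When the edge with address w (an edge of
  D_j, endpoints u,v) is replaced by the quadrilateral u,a,v,b, the new
  vertices are a = Mid w False and b = Mid w True, and the four new edges
  u-a, a-v, u-b, b-v get addresses 0#w, 1#w, 2#w, 3#w.\<close>

datatype dvert = Src | Snk | Mid "nat list" bool

primrec ends :: "nat list \<Rightarrow> dvert \<times> dvert" where
  "ends [] = (Src, Snk)"
| "ends (k # w) = (case ends w of (u, v) \<Rightarrow>
      (if k = 0 then (u, Mid w False)
       else if k = 1 then (Mid w False, v)
       else if k = 2 then (u, Mid w True)
       else (Mid w True, v)))"

definition addrs :: "nat \<Rightarrow> nat list set" where
  "addrs j = {w. length w = j \<and> set w \<subseteq> {0..<4}}"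

definition dverts :: "nat \<Rightarrow> dvert set" where
  "dverts n = {Src, Snk} \<union> {Mid w b | w b. w \<in> addrs (length w) \<and> length w < n}"

definition wedge :: "real \<Rightarrow> nat \<Rightarrow> dvert \<Rightarrow> dvert \<Rightarrow> real \<Rightarrow> bool" where
  "wedge eps n u v c \<longleftrightarrow> (\<exists>j\<le>n. \<exists>w\<in>addrs j.
      (ends w = (u, v) \<or> ends w = (v, u)) \<and> c = (1/2 + eps) ^ j)"

inductive wwalk :: "real \<Rightarrow> nat \<Rightarrow> dvert \<Rightarrow> dvert \<Rightarrow> real \<Rightarrow> bool"
  for eps n where
  refl: "wwalk eps n x x 0"
| step: "wedge eps n u v c \<Longrightarrow> wwalk eps n v y d \<Longrightarrow> wwalk eps n u y (c + d)"

definition wdist :: "real \<Rightarrow> nat \<Rightarrow> dvert \<Rightarrow> dvert \<Rightarrow> real" where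
  "wdist eps n x y = Inf {d. wwalk eps n x y d}"

definition in_ell2 :: "(nat \<Rightarrow> real) \<Rightarrow> bool" where
  "in_ell2 a \<longleftrightarrow> summable (\<lambda>i. (a i)\<^sup>2)"

definition ell2_dist :: "(nat \<Rightarrow> real) \<Rightarrow> (nat \<Rightarrow> real) \<Rightarrow> real" where
  "ell2_dist a b = sqrt (\<Sum>i. (a i - b i)\<^sup>2)"

definition embeds_with_distortion ::
  "'a set \<Rightarrow> ('a \<Rightarrow> 'a \<Rightarrow> real) \<Rightarrow> ('a \<Rightarrow> nat \<Rightarrow> real) \<Rightarrow> real \<Rightarrow> bool" where
  "embeds_with_distortion V d f D \<longleftrightarrow> (\<forall>x\<in>V. in_ell2 (f x)) \<and>
     (\<exists>s>0. \<forall>x\<in>V. \<forall>y\<in>V. s * d x y \<le> ell2_dist (f x) (f y) \<and>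
                           ell2_dist (f x) (f y) \<le> D * s * d x y)"

end

theory Submission
  imports Defs
begin

text \<open>
  Send a vertex x of W_n to its height (its distance from Src in D_n, normalised so that
  Snk has height 1) together with one coordinate for every sub-diamond containing x: if x
  lies in the copy of a diamond that replaced an edge of D_j, the coordinate is
  (1/2 + eps)^j times the tent function min(h, 1 - h) of the relative height h of x in
  that copy, placed on the branch of the copy that contains x.

  Along an edge of D_j the coordinates of the two endpoints differ at the scales j' > j by a
  geometric series whose ratio 4(1/2 + eps)^2 exceeds 1, so the total change is
  O((1/2 + eps)^j), i.e. of the order of the edge weight: the map is Lipschitz.  Conversely,
  suppose all coordinates of x and y differ by at most Q.  Writing D_(n+1) as four copies of
  D_n, either x and y lie in the same copy, and one rescales and uses induction, or they lie
  in different copies; then the top-level tent coordinates force x and y to be close to a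
  common corner of the top diamond, and a vertex with small coordinates is within
  O(Q / (1/2 - eps)) of its nearest pole.  This gives a walk of length O(Q / (1/2 - eps)).
\<close>

section \<open>Finitely supported vectors in l_2\<close>

lemma L2_set_mono_neutral_left:
  assumes "finite T" "S \<subseteq> T" "\<And>i. i \<in> T - S \<Longrightarrow> f i = 0"
  shows "L2_set f S = L2_set f T"
  unfolding L2_set_def using sum.mono_neutral_left[OF assms(1,2), of "\<lambda>i. (f i)\<^sup>2"] assms(3) by simp

definition ell2_encode :: "('c::countable \<Rightarrow> real) \<Rightarrow> nat \<Rightarrow> real" where
  "ell2_encode f i = (if i \<in> range (to_nat :: 'c \<Rightarrow> nat) then f (from_nat i) else 0)"

lemma ell2_encode_to_nat [simp]: "ell2_encode f (to_nat c) = f c"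
  unfolding ell2_encode_def by simp

lemma ell2_encode_vanishes:
  "i \<notin> to_nat ` S \<Longrightarrow> (\<And>c. c \<notin> S \<Longrightarrow> f c = 0) \<Longrightarrow> ell2_encode f i = 0"
  unfolding ell2_encode_def by (auto simp: image_iff)

lemma in_ell2_encode:
  "finite S \<Longrightarrow> (\<And>c. c \<notin> S \<Longrightarrow> f c = 0) \<Longrightarrow> in_ell2 (ell2_encode f)"
  unfolding in_ell2_def by (rule summable_finite[of "to_nat ` S"]) (auto simp: ell2_encode_vanishes)

lemma ell2_dist_encode:
  assumes "finite S" "\<And>c. c \<notin> S \<Longrightarrow> f c = 0" "\<And>c. c \<notin> S \<Longrightarrow> g c = 0"
  shows "ell2_dist (ell2_encode f) (ell2_encode g) = L2_set (\<lambda>c. f c - g c) S"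
proof -
  have "(\<Sum>i. (ell2_encode f i - ell2_encode g i)\<^sup>2)
      = (\<Sum>i\<in>to_nat ` S. (ell2_encode f i - ell2_encode g i)\<^sup>2)"
    by (rule suminf_finite) (use assms in \<open>auto simp: ell2_encode_vanishes\<close>)
  also have "\<dots> = (\<Sum>c\<in>S. (f c - g c)\<^sup>2)"
    by (subst sum.reindex) (auto simp: inj_on_def)
  finally show ?thesis
    unfolding ell2_dist_def L2_set_def by simp
qed

lemma embeds_with_distortion_ell2_encode:
  fixes f :: "'a \<Rightarrow> 'c::countable \<Rightarrow> real"
  assumes supp: "\<And>x. x \<in> V \<Longrightarrow> finite (S x)" "\<And>x c. x \<in> V \<Longrightarrow> c \<notin> S x \<Longrightarrow> f x c = 0"
    and "0 < K"
    and lower: "\<And>x y. x \<in> V \<Longrightarrow> y \<in> V \<Longrightarrow> d x y \<le> K * L2_set (\<lambda>c. f x c - f y c) (S x \<union> S y)"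
    and upper: "\<And>x y. x \<in> V \<Longrightarrow> y \<in> V \<Longrightarrow> L2_set (\<lambda>c. f x c - f y c) (S x \<union> S y) \<le> A * d x y"
  shows "embeds_with_distortion V d (\<lambda>x. ell2_encode (f x)) (A * K)"
  unfolding embeds_with_distortion_def
proof (intro conjI ballI exI[of _ "1 / K"])
  fix x y assume xy: "x \<in> V" "y \<in> V"
  show "in_ell2 (ell2_encode (f x))"
    using supp xy by (intro in_ell2_encode[where S = "S x"]) auto
  have dist: "ell2_dist (ell2_encode (f x)) (ell2_encode (f y)) = L2_set (\<lambda>c. f x c - f y c) (S x \<union> S y)"
    using supp xy by (intro ell2_dist_encode[where S = "S x \<union> S y"]) auto
  show "1 / K * d x y \<le> ell2_dist (ell2_encode (f x)) (ell2_encode (f y))"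
    using lower[OF xy] \<open>0 < K\<close> by (simp add: dist field_simps)
  show "ell2_dist (ell2_encode (f x)) (ell2_encode (f y)) \<le> A * K * (1 / K) * d x y"
    using upper[OF xy] \<open>0 < K\<close> by (simp add: dist)
qed (use \<open>0 < K\<close> in simp)

section \<open>Self-similarity of the diamonds\<close>

text \<open>The edge with address [k] of D_1 runs through the upper half of the diamond (it ends at
  Snk) iff upper_digit k, and lies on the branch through Mid [] True iff branch_digit k; as in
  ends, digits beyond 3 behave like 3.\<close>

definition upper_digit :: "nat \<Rightarrow> bool" where
  "upper_digit k \<longleftrightarrow> k \<noteq> 0 \<and> k \<noteq> 2"

definition branch_digit :: "nat \<Rightarrow> bool" where
  "branch_digit k \<longleftrightarrow> k \<noteq> 0 \<and> k \<noteq> 1"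

text \<open>subcopy k maps D_m onto the copy of D_m in D_(m+1) that replaced the edge [k] of D_1.
  The coarsest digit of an address is its last one, so the copy appends k.\<close>

fun subcopy :: "nat \<Rightarrow> dvert \<Rightarrow> dvert" where
  "subcopy k Src = (if upper_digit k then Mid [] (branch_digit k) else Src)"
| "subcopy k Snk = (if upper_digit k then Snk else Mid [] (branch_digit k))"
| "subcopy k (Mid w b) = Mid (w @ [k]) b"

lemma ends_snoc: "ends (w @ [k]) = (subcopy k (fst (ends w)), subcopy k (snd (ends w)))"
  by (induction w) (auto simp: upper_digit_def branch_digit_def split: prod.splits)

lemma dverts_0: "dverts 0 = {Src, Snk}"
  unfolding dverts_def by auto

lemma dverts_SucE:
  assumes "x \<in> dverts (Suc m)"
  obtains k x' where "k < 4" "x' \<in> dverts m" "x = subcopy k x'"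
proof -
  have poles: "Src \<in> dverts m" "Snk \<in> dverts m"
    unfolding dverts_def by auto
  consider "x = Src" | "x = Snk" | w b where "x = Mid w b" "w \<in> addrs (length w)" "length w < Suc m"
    using assms unfolding dverts_def by auto
  then show thesis
  proof cases
    case 1
    then show thesis using that[of 0 Src] poles by (simp add: upper_digit_def)
  next
    case 2
    then show thesis using that[of 1 Snk] poles by (simp add: upper_digit_def)
  next
    case 3
    show thesis
    proof (cases w rule: rev_exhaust)
      case Nil
      then have "x = subcopy (if b then 2 else 0) Snk"
        using 3 by (simp add: upper_digit_def branch_digit_def)
      then show thesis using that[of "if b then 2 else 0" Snk] poles by simp
    next
      case (snoc w' k)
      have "k < 4" "Mid w' b \<in> dverts m"
        using 3 snoc unfolding dverts_def addrs_def by auto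
      then show thesis using that 3 snoc by fastforce
    qed
  qed
qed

primrec base_height :: "nat list \<Rightarrow> real" where
  "base_height [] = 0"
| "base_height (k # w) = base_height w + (if upper_digit k then (1/2) ^ Suc (length w) else 0)"

fun height :: "dvert \<Rightarrow> real" where
  "height Src = 0"
| "height Snk = 1"
| "height (Mid w b) = base_height w + (1/2) ^ Suc (length w)"

lemma base_height_snoc: "base_height (w @ [k]) = (if upper_digit k then 1/2 else 0) + base_height w / 2"
  by (induction w) (auto simp: field_simps)

lemma base_height_bounds: "0 \<le> base_height w \<and> base_height w \<le> 1 - (1/2) ^ length w"
  by (induction w) (auto simp: field_simps)

lemma height_nonneg: "0 \<le> height x"
  by (cases x) (auto simp: base_height_bounds add_nonneg_nonneg)

lemma height_le_1: "height x \<le> 1"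
proof (cases x)
  case (Mid w b)
  have "base_height w + (1/2) ^ Suc (length w) \<le> 1 - (1/2) ^ length w + (1/2) ^ length w / 2"
    using base_height_bounds[of w] by simp
  also have "\<dots> \<le> 1"
    by simp
  finally show ?thesis using Mid by simp
qed auto

lemma height_subcopy: "height (subcopy k x) = (if upper_digit k then 1/2 else 0) + height x / 2"
  by (cases x) (auto simp: base_height_snoc field_simps)

lemma height_ends_gap: "\<bar>height (fst (ends w)) - height (snd (ends w))\<bar> = (1/2) ^ length w"
proof (induction w rule: rev_induct)
  case (snoc k w)
  have "\<bar>height (subcopy k u) - height (subcopy k v)\<bar> = \<bar>height u - height v\<bar> / 2" for u v
    by (simp add: height_subcopy flip: diff_divide_distrib)
  then show ?case using snoc by (simp add: ends_snoc)
qed simp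

lemma walk_nonneg:
  assumes "0 \<le> eps"
  shows "wwalk eps n x y d \<Longrightarrow> 0 \<le> d"
  by (induction rule: wwalk.induct) (use assms in \<open>auto simp: wedge_def\<close>)

lemma walk_trans: "wwalk eps n x y d \<Longrightarrow> wwalk eps n y z e \<Longrightarrow> wwalk eps n x z (d + e)"
proof (induction arbitrary: e rule: wwalk.induct)
  case (step u v c y d)
  then show ?case
    using wwalk.step[OF step.hyps(1) step.IH] by (simp add: add.assoc)
qed simp

lemma walk_of_wedge: "wedge eps n u v c \<Longrightarrow> wwalk eps n u v c"
  using wwalk.step[OF _ wwalk.refl] by fastforce

lemma wedge_commute: "wedge eps n u v c \<Longrightarrow> wedge eps n v u c"
  unfolding wedge_def by blast

lemma walk_commute: "wwalk eps n x y d \<Longrightarrow> wwalk eps n y x d"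
proof (induction rule: wwalk.induct)
  case (step u v c y d)
  then show ?case
    using walk_trans[OF step.IH walk_of_wedge[OF wedge_commute[OF step.hyps(1)]]] by (simp add: add.commute)
qed (rule wwalk.refl)

lemma walk_join:
  assumes "wwalk eps n x z d" "wwalk eps n y z e" "d \<le> M" "e \<le> M"
  shows "\<exists>d'. wwalk eps n x y d' \<and> d' \<le> 2 * M"
  using walk_trans[OF assms(1) walk_commute[OF assms(2)]] assms(3,4) by (intro exI[of _ "d + e"]) auto

lemma wedge_top_level: "k < 4 \<Longrightarrow> wedge eps (Suc m) (fst (ends [k])) (snd (ends [k])) (1/2 + eps)"
  unfolding wedge_def by (intro exI[of _ 1] conjI bexI[of _ "[k]"]) (auto simp: addrs_def)

lemma wedge_Src_Snk: "wedge eps n Src Snk 1"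
  unfolding wedge_def addrs_def by (intro exI[of _ 0]) force

lemma wedge_subcopy:
  assumes "k < 4" "wedge eps m u v c"
  shows "wedge eps (Suc m) (subcopy k u) (subcopy k v) ((1/2 + eps) * c)"
proof -
  obtain j w where "j \<le> m" "w \<in> addrs j" "ends w = (u, v) \<or> ends w = (v, u)" "c = (1/2 + eps) ^ j"
    using assms(2) unfolding wedge_def by blast
  then show ?thesis
    unfolding wedge_def using assms(1)
    by (intro exI[of _ "Suc j"] conjI bexI[of _ "w @ [k]"]) (auto simp: ends_snoc addrs_def)
qed

lemma walk_subcopy:
  assumes "k < 4"
  shows "wwalk eps m x y d \<Longrightarrow> wwalk eps (Suc m) (subcopy k x) (subcopy k y) ((1/2 + eps) * d)"
proof (induction rule: wwalk.induct)
  case (refl x)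
  then show ?case using wwalk.refl by fastforce
next
  case (step u v c y d)
  then show ?case
    using wwalk.step[OF wedge_subcopy[OF assms step.hyps(1)] step.IH] by (simp add: distrib_left)
qed

section \<open>The embedding\<close>

definition tent :: "real \<Rightarrow> real" where
  "tent t = min t (1 - t)"

text \<open>The branch of the top diamond containing x; for the poles the value is irrelevant
  because their tent value vanishes.\<close>

fun vbranch :: "dvert \<Rightarrow> bool" where
  "vbranch Src = False"
| "vbranch Snk = False"
| "vbranch (Mid w b) = (if w = [] then b else branch_digit (last w))"

definition top_coord :: "dvert \<Rightarrow> bool \<Rightarrow> real" where
  "top_coord x c = (if vbranch x = c then tent (height x) else 0)"

text \<open>Coordinate (s, c) of Mid (t @ s) b: inside the copy of a diamond that replaced the edge s
  of D_(length s), this vertex is Mid t b.\<close>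

fun coord :: "real \<Rightarrow> dvert \<Rightarrow> nat list \<times> bool \<Rightarrow> real" where
  "coord r (Mid w b) (s, c) =
     (if \<exists>t. w = t @ s then r ^ length s * top_coord (Mid (take (length w - length s) w) b) c else 0)"
| "coord r Src _ = 0"
| "coord r Snk _ = 0"

fun addr_suffixes :: "dvert \<Rightarrow> nat list set" where
  "addr_suffixes (Mid w b) = {s. \<exists>t. w = t @ s}"
| "addr_suffixes Src = {}"
| "addr_suffixes Snk = {}"

definition proper_suffixes :: "nat list \<Rightarrow> nat list set" where
  "proper_suffixes w = {s. \<exists>t. t \<noteq> [] \<and> w = t @ s}"

lemma finite_suffixes: "finite {s. \<exists>t. w = t @ s}"
proof (rule finite_subset)
  show "{s. \<exists>t. w = t @ s} \<subseteq> (\<lambda>i. drop i w) ` {..length w}"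
  proof
    fix s assume "s \<in> {s. \<exists>t. w = t @ s}"
    then obtain t where "w = t @ s" by blast
    then show "s \<in> (\<lambda>i. drop i w) ` {..length w}"
      by (intro image_eqI[of _ _ "length t"]) auto
  qed
qed simp

lemma finite_addr_suffixes: "finite (addr_suffixes x)"
  by (cases x) (auto simp: finite_suffixes)

lemma finite_proper_suffixes: "finite (proper_suffixes w)"
  unfolding proper_suffixes_def by (rule finite_subset[OF _ finite_suffixes]) auto

lemma snoc_eq_append_snoc: "w @ [k] = t @ s @ [k'] \<longleftrightarrow> k' = k \<and> w = t @ s"
  by (metis append.assoc append1_eq_conv)

lemma suffix_snoc_cases:
  assumes "w @ [k] = t @ s" "s \<noteq> []"
  obtains s' where "s = s' @ [k]" "w = t @ s'"
  using assms by (cases s rule: rev_exhaust) (auto simp: snoc_eq_append_snoc)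

lemma proper_suffixes_snoc:
  "proper_suffixes (w @ [k]) = insert [] ((\<lambda>s. s @ [k]) ` proper_suffixes w)"
  unfolding proper_suffixes_def by (auto elim: suffix_snoc_cases simp: snoc_eq_append_snoc)

lemma addr_suffixes_subcopy:
  "addr_suffixes (subcopy k x) \<subseteq> insert [] ((\<lambda>s. s @ [k]) ` addr_suffixes x)"
  by (cases x) (auto elim: suffix_snoc_cases)

lemma addr_suffixes_ends:
  "addr_suffixes (fst (ends w)) \<subseteq> proper_suffixes w \<and> addr_suffixes (snd (ends w)) \<subseteq> proper_suffixes w"
proof (induction w rule: rev_induct)
  case (snoc k w)
  have "addr_suffixes (subcopy k u) \<subseteq> proper_suffixes (w @ [k])"
    if "addr_suffixes u \<subseteq> proper_suffixes w" for u
    using addr_suffixes_subcopy[of k u] that unfolding proper_suffixes_snoc by blast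
  then show ?case
    using snoc by (simp add: ends_snoc)
qed simp

lemma coord_vanishes: "s \<notin> addr_suffixes x \<Longrightarrow> coord r x (s, c) = 0"
  by (cases x) auto

lemma coord_subcopy_snoc:
  "coord r (subcopy k x) (s @ [k'], c) = (if k' = k then r * coord r x (s, c) else 0)"
proof (cases x)
  case (Mid w b)
  then show ?thesis
    by (auto simp: snoc_eq_append_snoc)
qed auto

lemma tent_height_subcopy:
  "tent (height (subcopy k x)) = (if upper_digit k then (1 - height x) / 2 else height x / 2)"
  using height_nonneg[of x] height_le_1[of x] by (auto simp: height_subcopy tent_def)

lemma tent_height_nonneg: "0 \<le> tent (height x)"
  using height_nonneg[of x] height_le_1[of x] by (simp add: tent_def)

lemma coord_subcopy_Nil:
  "coord r (subcopy k x) ([], c) = (if c = branch_digit k then tent (height (subcopy k x)) else 0)"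
  by (cases x) (auto simp: top_coord_def tent_def branch_digit_def upper_digit_def)

lemma coord_Nil_vbranch: "coord r x ([], vbranch x) = tent (height x)"
  by (cases x) (auto simp: top_coord_def tent_def)

fun feature :: "real \<Rightarrow> dvert \<Rightarrow> (nat list \<times> bool) option \<Rightarrow> real" where
  "feature r x None = height x"
| "feature r x (Some c) = coord r x c"

definition feature_supp :: "dvert \<Rightarrow> (nat list \<times> bool) option set" where
  "feature_supp x = insert None (Some ` (addr_suffixes x \<times> UNIV))"

definition feature_dist :: "real \<Rightarrow> dvert \<Rightarrow> dvert \<Rightarrow> real" where
  "feature_dist r x y = L2_set (\<lambda>c. feature r x c - feature r y c) (feature_supp x \<union> feature_supp y)"

lemma finite_feature_supp: "finite (feature_supp x)"
  by (simp add: feature_supp_def finite_addr_suffixes)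

lemma feature_vanishes: "c \<notin> feature_supp x \<Longrightarrow> feature r x c = 0"
  by (cases c) (auto simp: feature_supp_def image_iff intro!: coord_vanishes)

lemma feature_dist_eq_L2_set:
  assumes "finite T" "feature_supp x \<union> feature_supp y \<subseteq> T"
  shows "feature_dist r x y = L2_set (\<lambda>c. feature r x c - feature r y c) T"
  unfolding feature_dist_def using assms by (intro L2_set_mono_neutral_left) (auto simp: feature_vanishes)

lemma feature_dist_commute: "feature_dist r x y = feature_dist r y x"
  unfolding feature_dist_def L2_set_def by (simp add: Un_commute power2_commute)

lemma feature_dist_self: "feature_dist r x x = 0"
  unfolding feature_dist_def L2_set_def by simp

lemma feature_dist_triangle: "feature_dist r x z \<le> feature_dist r x y + feature_dist r y z"
proof -
  let ?T = "feature_supp x \<union> feature_supp y \<union> feature_supp z"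
  have T: "finite ?T" by (simp add: finite_feature_supp)
  have "feature_dist r x z = L2_set (\<lambda>c. (feature r x c - feature r y c) + (feature r y c - feature r z c)) ?T"
    by (subst feature_dist_eq_L2_set[OF T]) auto
  also have "\<dots> \<le> L2_set (\<lambda>c. feature r x c - feature r y c) ?T + L2_set (\<lambda>c. feature r y c - feature r z c) ?T"
    by (rule L2_set_triangle_ineq)
  also have "\<dots> = feature_dist r x y + feature_dist r y z"
    by (subst (1 2) feature_dist_eq_L2_set[OF T]) auto
  finally show ?thesis .
qed

lemma abs_feature_diff_le_dist: "\<bar>feature r x c - feature r y c\<bar> \<le> feature_dist r x y"
proof (cases "c \<in> feature_supp x \<union> feature_supp y")
  case True
  then show ?thesis
    unfolding feature_dist_def using member_le_L2_set[of _ c "\<lambda>c. \<bar>feature r x c - feature r y c\<bar>"]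
    by (simp add: finite_feature_supp L2_set_def)
next
  case False
  then show ?thesis by (simp add: feature_vanishes feature_dist_def)
qed

section \<open>The embedding is Lipschitz\<close>

definition edge_energy :: "real \<Rightarrow> nat list \<Rightarrow> dvert \<Rightarrow> dvert \<Rightarrow> real" where
  "edge_energy r w u v =
     (\<Sum>s\<in>proper_suffixes w. (coord r u (s, False) - coord r v (s, False))\<^sup>2
                          + (coord r u (s, True) - coord r v (s, True))\<^sup>2)"

lemma edge_energy_snoc:
  "edge_energy r (w @ [k]) (subcopy k u) (subcopy k v) = ((height u - height v) / 2)\<^sup>2 + r\<^sup>2 * edge_energy r w u v"
proof -
  have top: "(coord r (subcopy k u) ([], False) - coord r (subcopy k v) ([], False))\<^sup>2
           + (coord r (subcopy k u) ([], True) - coord r (subcopy k v) ([], True))\<^sup>2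
           = ((height u - height v) / 2)\<^sup>2"
    by (cases "branch_digit k"; cases "upper_digit k")
      (auto simp: coord_subcopy_Nil tent_height_subcopy power2_eq_square field_simps)
  have shifted: "(coord r (subcopy k u) (s @ [k], c) - coord r (subcopy k v) (s @ [k], c))\<^sup>2
      = r\<^sup>2 * (coord r u (s, c) - coord r v (s, c))\<^sup>2" for s c
    by (simp add: coord_subcopy_snoc power_mult_distrib flip: right_diff_distrib)
  have "[] \<notin> (\<lambda>s. s @ [k]) ` proper_suffixes w" "inj_on (\<lambda>s. s @ [k]) (proper_suffixes w)"
    by (auto simp: inj_on_def)
  then show ?thesis
    unfolding edge_energy_def proper_suffixes_snoc
    by (simp add: finite_proper_suffixes sum.reindex top shifted sum_distrib_left distrib_left)
qed

text \<open>Passing from w to w @ [k] multiplies the old terms by r^2 and adds (gap/2)^2 = 4^-(length w + 1);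
  the hypothesis on B is what keeps B (r^(2j) - 4^-j) an upper bound through this recursion.\<close>

lemma edge_energy_ends_le:
  assumes "0 \<le> B" "1 + B \<le> 4 * r\<^sup>2 * B"
  shows "edge_energy r w (fst (ends w)) (snd (ends w)) \<le> B * (r ^ (2 * length w) - (1/4) ^ length w)"
proof (induction w rule: rev_induct)
  case Nil
  then show ?case by (simp add: edge_energy_def proper_suffixes_def)
next
  case (snoc k w)
  let ?u = "fst (ends w)" and ?v = "snd (ends w)"
  define a where "a = (1/4 :: real) ^ length w"
  have "((height ?u - height ?v) / 2)\<^sup>2 = \<bar>height ?u - height ?v\<bar>\<^sup>2 / 4"
    by (simp add: power_divide)
  also have "\<dots> = a / 4"
    unfolding height_ends_gap a_def by (simp add: power2_eq_square flip: power_mult_distrib)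
  finally have "edge_energy r (w @ [k]) (subcopy k ?u) (subcopy k ?v) = a / 4 + r\<^sup>2 * edge_energy r w ?u ?v"
    by (simp add: edge_energy_snoc)
  also have "\<dots> \<le> a / 4 + r\<^sup>2 * (B * (r ^ (2 * length w) - a))"
    using snoc unfolding a_def by (simp add: mult_left_mono)
  also have "\<dots> \<le> B * (r\<^sup>2 * r ^ (2 * length w) - a / 4)"
    using mult_left_mono[OF assms(2), of a] by (simp add: a_def algebra_simps)
  finally show ?case
    by (simp add: ends_snoc a_def power_add power_mult power2_eq_square mult.assoc)
qed

lemma feature_dist_ends_le:
  assumes "0 \<le> B" "1 + B \<le> 4 * r\<^sup>2 * B" "1/2 \<le> r"
  shows "feature_dist r (fst (ends w)) (snd (ends w)) \<le> sqrt (B + 1) * r ^ length w"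
proof -
  let ?u = "fst (ends w)" and ?v = "snd (ends w)"
  let ?S = "Some ` (proper_suffixes w \<times> (UNIV :: bool set))"
  have supp: "feature_supp ?u \<union> feature_supp ?v \<subseteq> insert None ?S"
    using addr_suffixes_ends[of w] by (auto simp: feature_supp_def)
  have "(\<Sum>c\<in>?S. (feature r ?u c - feature r ?v c)\<^sup>2) = (\<Sum>c\<in>proper_suffixes w \<times> UNIV. (coord r ?u c - coord r ?v c)\<^sup>2)"
    by (simp add: sum.reindex)
  also have "\<dots> = (\<Sum>s\<in>proper_suffixes w. \<Sum>b\<in>UNIV. (coord r ?u (s, b) - coord r ?v (s, b))\<^sup>2)"
    by (simp add: sum.cartesian_product)
  also have "\<dots> = edge_energy r w ?u ?v"
    unfolding edge_energy_def by (simp add: UNIV_bool add.commute)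
  finally have energy: "(\<Sum>c\<in>?S. (feature r ?u c - feature r ?v c)\<^sup>2) = edge_energy r w ?u ?v" .
  have gap: "(height ?u - height ?v)\<^sup>2 = (1/4) ^ length w"
    using height_ends_gap[of w] power2_abs[of "height ?u - height ?v"]
    by (simp add: power2_eq_square flip: power_mult_distrib)
  have "feature_dist r ?u ?v = sqrt ((1/4) ^ length w + edge_energy r w ?u ?v)"
    using feature_dist_eq_L2_set[OF _ supp] energy gap
    by (simp add: L2_set_def finite_proper_suffixes)
  also have "\<dots> \<le> sqrt ((B + 1) * (r\<^sup>2) ^ length w)"
  proof -
    have "(1/4 :: real) ^ length w \<le> (r\<^sup>2) ^ length w"
      using assms(3) by (intro power_mono) (auto simp: power2_eq_square intro: mult_mono[of "1/2" r "1/2" r, simplified])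
    moreover have "r ^ (2 * length w) = (r\<^sup>2) ^ length w"
      by (simp add: power_mult)
    moreover have "0 \<le> B * (1/4) ^ length w"
      using assms(1) by simp
    ultimately show ?thesis
      using edge_energy_ends_le[OF assms(1,2), of w] by (simp add: algebra_simps)
  qed
  also have "\<dots> = sqrt (B + 1) * r ^ length w"
    using assms(3) by (simp add: real_sqrt_mult power2_eq_square power_mult_distrib)
  finally show ?thesis .
qed

lemma feature_dist_le_walk:
  assumes "0 \<le> B" "1 + B \<le> 4 * (1/2 + eps)\<^sup>2 * B" "0 \<le> eps"
  shows "wwalk eps n x y d \<Longrightarrow> feature_dist (1/2 + eps) x y \<le> sqrt (B + 1) * d"
proof (induction rule: wwalk.induct)
  case (refl x)
  then show ?case by (simp add: feature_dist_self)
next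
  case (step u v c y d)
  obtain j w where "w \<in> addrs j" "ends w = (u, v) \<or> ends w = (v, u)" "c = (1/2 + eps) ^ j"
    using step.hyps(1) unfolding wedge_def by blast
  then have "feature_dist (1/2 + eps) u v \<le> sqrt (B + 1) * c"
    using feature_dist_ends_le[OF assms(1,2), of w] assms(3) feature_dist_commute
    by (auto simp: addrs_def)
  then show ?case
    using feature_dist_triangle[of "1/2 + eps" u y v] step.IH by (simp add: distrib_left)
qed

section \<open>The embedding is co-Lipschitz\<close>

definition near_pole :: "dvert \<Rightarrow> dvert" where
  "near_pole x = (if height x \<le> 1/2 then Src else Snk)"

lemma near_pole_cases: "near_pole x = Src \<or> near_pole x = Snk"
  by (simp add: near_pole_def)

lemma near_pole_subcopy:
  assumes "tent (height (subcopy k x)) < 1/4"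
  shows "near_pole (subcopy k x) = subcopy k (near_pole x)"
  using assms height_nonneg[of x] height_le_1[of x]
  by (auto simp: near_pole_def height_subcopy tent_def split: if_splits)

text \<open>Since Q < 1/5, each of x and y has height at most 2Q < 2/5 or at least 3/5, i.e. is clearly
  near one pole of its copy; the top-level coordinates and the height gap then exclude every
  configuration in which the two corresponding corners of the top diamond differ.\<close>

lemma subcopies_meet_at_near_poles:
  assumes "a < 4" "b < 4" "a \<noteq> b" "Q < 1/5"
    and "tent (height x) \<le> 2 * Q" "tent (height y) \<le> 2 * Q"
    and top: "\<And>c. \<bar>coord r (subcopy a x) ([], c) - coord r (subcopy b y) ([], c)\<bar> \<le> Q"
    and "\<bar>height (subcopy a x) - height (subcopy b y)\<bar> \<le> 2 * Q"
  shows "subcopy a (near_pole x) = subcopy b (near_pole y)"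
proof -
  have h: "0 \<le> height x" "height x \<le> 1" "0 \<le> height y" "height y \<le> 1"
    by (simp_all add: height_nonneg height_le_1)
  have px: "height x \<le> 2 * Q \<or> 1 - height x \<le> 2 * Q" and py: "height y \<le> 2 * Q \<or> 1 - height y \<le> 2 * Q"
    using assms(5,6) by (auto simp: tent_def min_def split: if_splits)
  note facts = top[of False, unfolded coord_subcopy_Nil tent_height_subcopy]
    top[of True, unfolded coord_subcopy_Nil tent_height_subcopy] assms(8)[unfolded height_subcopy]
  have "a = 0 \<or> a = 1 \<or> a = 2 \<or> a = 3" "b = 0 \<or> b = 1 \<or> b = 2 \<or> b = 3"
    using assms(1,2) by arith+
  then show ?thesis
    unfolding near_pole_def using facts px py h assms(3,4)
    by (elim disjE; simp add: upper_digit_def branch_digit_def abs_le_iff diff_divide_distrib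
        split: if_split; (elim disjE conjE)?; (intro conjI impI)?; linarith)
qed

locale weighted_diamonds =
  fixes eps :: real
  assumes eps_pos: "0 < eps" and eps_less_half: "eps < 1/2"
begin

abbreviation ratio :: real where
  "ratio \<equiv> 1/2 + eps"

definition radius :: real where
  "radius = 1 / (1/2 - eps)"

lemma ratio_gt_half: "1/2 < ratio"
  using eps_pos by simp

lemma ratio_less_1: "ratio < 1"
  using eps_less_half by simp

lemma radius_ge_1: "1 \<le> radius"
  unfolding radius_def using eps_pos eps_less_half by (simp add: field_simps)

lemma radius_recursion: "ratio * radius + ratio \<le> radius"
proof -
  have "ratio * radius + ratio = (1 - (1/2 - eps)\<^sup>2) * radius"
    unfolding radius_def using eps_less_half by (simp add: field_simps power2_eq_square)
  also have "\<dots> \<le> radius"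
    using radius_ge_1 by (simp add: mult_left_le_one_le)
  finally show ?thesis .
qed

lemma walk_length_nonneg: "wwalk eps n x y d \<Longrightarrow> 0 \<le> d"
  using walk_nonneg[of eps n x y d] eps_pos by simp

lemma walk_subcopy_le:
  assumes "k < 4" "wwalk eps m x y d" "d \<le> M / ratio"
  shows "\<exists>d'. wwalk eps (Suc m) (subcopy k x) (subcopy k y) d' \<and> d' \<le> M"
proof -
  have "ratio * d \<le> M"
    using assms(3) ratio_gt_half by (simp add: field_simps)
  then show ?thesis
    using walk_subcopy[OF assms(1,2)] by blast
qed

lemma walk_le_of_eq_or_wedge:
  assumes "x = p \<or> wedge eps n x p c" "c \<le> M" "0 \<le> M"
  shows "\<exists>d. wwalk eps n x p d \<and> d \<le> M"
proof (cases "x = p")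
  case True
  then show ?thesis using wwalk.refl[of eps n p] assms(3) by blast
next
  case False
  then show ?thesis using assms(1,2) walk_of_wedge by blast
qed

lemma walk_subcopy_pole:
  assumes "k < 4" "p = Src \<or> p = Snk"
  shows "\<exists>d. wwalk eps (Suc m) (subcopy k p) p d \<and> d \<le> ratio"
proof (rule walk_le_of_eq_or_wedge)
  have "k = 0 \<or> k = 1 \<or> k = 2 \<or> k = 3"
    using assms(1) by arith
  then show "subcopy k p = p \<or> wedge eps (Suc m) (subcopy k p) p ratio"
    using assms(2) wedge_top_level[of 1 eps m] wedge_top_level[of 3 eps m]
      wedge_commute[OF wedge_top_level[of 0 eps m]] wedge_commute[OF wedge_top_level[of 2 eps m]]
    by (auto simp: upper_digit_def branch_digit_def)
qed (use eps_pos in auto)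

lemma walk_to_pole:
  assumes "x \<in> dverts n" "p = Src \<or> p = Snk"
  shows "\<exists>d. wwalk eps n x p d \<and> d \<le> radius"
  using assms(1)
proof (induction n arbitrary: x)
  case 0
  then have "x = p \<or> wedge eps 0 x p 1"
    using assms(2) wedge_Src_Snk wedge_commute[OF wedge_Src_Snk] by (auto simp: dverts_0)
  then show ?case
    using radius_ge_1 by (rule walk_le_of_eq_or_wedge) (use radius_ge_1 in simp)
next
  case (Suc m)
  obtain k x' where k: "k < 4" and x': "x' \<in> dverts m" and x: "x = subcopy k x'"
    using Suc.prems by (rule dverts_SucE)
  obtain d where d: "wwalk eps m x' p d" "d \<le> radius"
    using Suc.IH[OF x'] by blast
  obtain e where e: "wwalk eps (Suc m) (subcopy k p) p e" "e \<le> ratio"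
    using walk_subcopy_pole[OF k assms(2)] by blast
  have "ratio * d \<le> ratio * radius"
    using d(2) eps_pos by (simp add: mult_left_mono)
  then have "ratio * d + e \<le> radius"
    using e(2) radius_recursion by linarith
  moreover have "wwalk eps (Suc m) x p (ratio * d + e)"
    using walk_trans[OF walk_subcopy[OF k d(1)] e(1)] x by simp
  ultimately show ?case by blast
qed

lemma walk_le_of_large_gap:
  assumes "x \<in> dverts n" "y \<in> dverts n" "1/5 \<le> Q"
  shows "\<exists>d. wwalk eps n x y d \<and> d \<le> 10 * radius * Q"
proof -
  obtain d e where "wwalk eps n x Src d" "wwalk eps n y Src e" "d \<le> radius" "e \<le> radius"
    using walk_to_pole assms(1,2) by blast
  then obtain d' where "wwalk eps n x y d'" "d' \<le> 2 * radius"
    using walk_join by metis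
  moreover have "2 * radius \<le> 10 * radius * Q"
    using assms(3) radius_ge_1 by simp
  ultimately show ?thesis
    using order_trans by blast
qed

lemma coord_gap_le_of_subcopy:
  assumes "\<And>c. \<bar>coord ratio (subcopy a x) c - v c\<bar> \<le> Q"
    and "\<And>s e. v (s @ [a], e) = ratio * w (s, e)"
  shows "\<bar>coord ratio x c - w c\<bar> \<le> Q / ratio"
proof (cases c)
  case (Pair s e)
  have "ratio * \<bar>coord ratio x c - w c\<bar> \<le> Q"
    using assms(1)[of "(s @ [a], e)"] assms(2) Pair eps_pos
    by (simp add: coord_subcopy_snoc abs_mult flip: right_diff_distrib)
  then show ?thesis
    using ratio_gt_half by (simp add: field_simps)
qed

lemma gaps_in_same_subcopy:
  assumes "\<And>c. \<bar>coord ratio (subcopy a x) c - coord ratio (subcopy a y) c\<bar> \<le> Q"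
    and "\<bar>height (subcopy a x) - height (subcopy a y)\<bar> \<le> 2 * Q"
  shows "\<bar>coord ratio x c - coord ratio y c\<bar> \<le> Q / ratio"
    and "\<bar>height x - height y\<bar> \<le> 2 * (Q / ratio)"
proof -
  show "\<bar>coord ratio x c - coord ratio y c\<bar> \<le> Q / ratio"
    using assms(1) by (rule coord_gap_le_of_subcopy) (simp add: coord_subcopy_snoc)
  have "\<bar>height x - height y\<bar> / 2 \<le> Q"
    using assms(1)[of "([], branch_digit a)"]
    by (cases "upper_digit a") (auto simp: coord_subcopy_Nil tent_height_subcopy abs_le_iff diff_divide_distrib)
  moreover have "Q \<le> Q / ratio"
    using assms(2) ratio_gt_half ratio_less_1 by (simp add: field_simps mult_left_le)
  ultimately show "\<bar>height x - height y\<bar> \<le> 2 * (Q / ratio)"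
    by simp
qed

lemma walk_to_near_pole:
  assumes "x \<in> dverts n" "\<And>c. \<bar>coord ratio x c\<bar> \<le> Q"
  shows "\<exists>d. wwalk eps n x (near_pole x) d \<and> d \<le> 4 * radius * Q"
  using assms
proof (induction n arbitrary: x Q)
  case 0
  have "0 \<le> Q"
    using "0.prems"(2) abs_ge_zero order_trans by blast
  moreover have "near_pole x = x"
    using "0.prems"(1) by (auto simp: dverts_0 near_pole_def)
  ultimately show ?case
    using wwalk.refl radius_ge_1 by (intro exI[of _ 0]) auto
next
  case (Suc m)
  show ?case
  proof (cases "1/4 \<le> Q")
    case True
    moreover have "radius \<le> 4 * radius * Q"
      using True radius_ge_1 by simp
    ultimately show ?thesis
      using walk_to_pole[OF Suc.prems(1) near_pole_cases] order_trans by blast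
  next
    case False
    obtain k x' where k: "k < 4" and x': "x' \<in> dverts m" and x: "x = subcopy k x'"
      using Suc.prems(1) by (rule dverts_SucE)
    have "tent (height x) \<le> Q"
      using Suc.prems(2)[of "([], vbranch x)"] tent_height_nonneg[of x] by (simp add: coord_Nil_vbranch)
    then have pole: "near_pole x = subcopy k (near_pole x')"
      using near_pole_subcopy False x by simp
    have "\<bar>coord ratio x' c - 0\<bar> \<le> Q / ratio" for c
      by (rule coord_gap_le_of_subcopy[where a = k and v = "\<lambda>_. 0"]) (use Suc.prems(2) x in simp_all)
    then have "\<bar>coord ratio x' c\<bar> \<le> Q / ratio" for c
      by simp
    then obtain d where "wwalk eps m x' (near_pole x') d" "d \<le> 4 * radius * Q / ratio"
      using Suc.IH[OF x'] by fastforce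
    then show ?thesis
      using walk_subcopy_le[OF k] x pole by simp
  qed
qed

lemma walk_between_distinct_subcopies:
  assumes "a < 4" "b < 4" "a \<noteq> b" "Q < 1/5" "x \<in> dverts m" "y \<in> dverts m"
    and gap: "\<And>c. \<bar>coord ratio (subcopy a x) c - coord ratio (subcopy b y) c\<bar> \<le> Q"
    and height_gap: "\<bar>height (subcopy a x) - height (subcopy b y)\<bar> \<le> 2 * Q"
  shows "\<exists>d. wwalk eps (Suc m) (subcopy a x) (subcopy b y) d \<and> d \<le> 8 * radius * Q"
proof -
  have "\<bar>coord ratio x c - 0\<bar> \<le> Q / ratio" for c
    by (rule coord_gap_le_of_subcopy[where a = a and v = "coord ratio (subcopy b y)"])
      (use gap assms(3) in \<open>simp_all add: coord_subcopy_snoc\<close>)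
  moreover have "\<bar>coord ratio y c - 0\<bar> \<le> Q / ratio" for c
    by (rule coord_gap_le_of_subcopy[where a = b and v = "coord ratio (subcopy a x)"])
      (use gap assms(3) in \<open>simp_all add: coord_subcopy_snoc abs_minus_commute\<close>)
  ultimately have cx: "\<bar>coord ratio x c\<bar> \<le> Q / ratio" and cy: "\<bar>coord ratio y c\<bar> \<le> Q / ratio" for c
    by simp_all
  have "0 \<le> Q"
    using gap[of "([], False)"] by linarith
  then have "Q / ratio \<le> 2 * Q"
    using ratio_gt_half by (simp add: field_simps)
  then have "tent (height x) \<le> 2 * Q" "tent (height y) \<le> 2 * Q"
    using cx[of "([], vbranch x)"] cy[of "([], vbranch y)"] tent_height_nonneg
    by (simp_all add: coord_Nil_vbranch)
  then have meet: "subcopy a (near_pole x) = subcopy b (near_pole y)"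
    using subcopies_meet_at_near_poles[OF assms(1-4)] gap height_gap by blast
  obtain d where "wwalk eps m x (near_pole x) d" "d \<le> 4 * radius * Q / ratio"
    using walk_to_near_pole[OF assms(5) cx] by auto
  then obtain d' where d': "wwalk eps (Suc m) (subcopy a x) (subcopy a (near_pole x)) d'"
    "d' \<le> 4 * radius * Q"
    using walk_subcopy_le[OF assms(1)] by blast
  obtain e where "wwalk eps m y (near_pole y) e" "e \<le> 4 * radius * Q / ratio"
    using walk_to_near_pole[OF assms(6) cy] by auto
  then obtain e' where e': "wwalk eps (Suc m) (subcopy b y) (subcopy a (near_pole x)) e'"
    "e' \<le> 4 * radius * Q"
    using walk_subcopy_le[OF assms(2)] meet by metis
  show ?thesis
    using walk_join[OF d'(1) e'(1) d'(2) e'(2)] by (simp add: mult.assoc)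
qed

lemma walk_le_feature_gap:
  assumes "x \<in> dverts n" "y \<in> dverts n"
    and "\<And>c. \<bar>coord ratio x c - coord ratio y c\<bar> \<le> Q" "\<bar>height x - height y\<bar> \<le> 2 * Q"
  shows "\<exists>d. wwalk eps n x y d \<and> d \<le> 10 * radius * Q"
  using assms
proof (induction n arbitrary: x y Q)
  case 0
  show ?case
  proof (cases "x = y")
    case True
    have "0 \<le> 10 * radius * Q"
      using "0.prems"(4) radius_ge_1 by simp
    then show ?thesis
      using True wwalk.refl by blast
  next
    case False
    then have "1/5 \<le> Q"
      using "0.prems"(1,2,4) by (auto simp: dverts_0)
    then show ?thesis
      using walk_le_of_large_gap "0.prems"(1,2) by blast
  qed
next
  case (Suc m)
  show ?case
  proof (cases "1/5 \<le> Q")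
    case True
    then show ?thesis
      using walk_le_of_large_gap Suc.prems(1,2) by blast
  next
    case False
    obtain a x' where a: "a < 4" and x': "x' \<in> dverts m" and x: "x = subcopy a x'"
      using Suc.prems(1) by (rule dverts_SucE)
    obtain b y' where b: "b < 4" and y': "y' \<in> dverts m" and y: "y = subcopy b y'"
      using Suc.prems(2) by (rule dverts_SucE)
    show ?thesis
    proof (cases "a = b")
      case True
      have coords: "\<bar>coord ratio x' c - coord ratio y' c\<bar> \<le> Q / ratio" for c
        using gaps_in_same_subcopy(1)[of a x' y' Q] Suc.prems(3,4) x y True by simp
      have heights: "\<bar>height x' - height y'\<bar> \<le> 2 * (Q / ratio)"
        using gaps_in_same_subcopy(2)[of a x' y' Q] Suc.prems(3,4) x y True by simp
      obtain d where "wwalk eps m x' y' d" "d \<le> 10 * radius * Q / ratio"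
        using Suc.IH[OF x' y' coords heights] by auto
      then show ?thesis
        using walk_subcopy_le[OF a] x y True by simp
    next
      case False
      have "\<exists>d. wwalk eps (Suc m) x y d \<and> d \<le> 8 * radius * Q"
        unfolding x y
        by (rule walk_between_distinct_subcopies[OF a b False _ x' y'])
          (use \<open>\<not> 1/5 \<le> Q\<close> Suc.prems(3,4) x y in simp_all)
      then obtain d where "wwalk eps (Suc m) x y d" "d \<le> 8 * radius * Q"
        by blast
      moreover have "8 * radius * Q \<le> 10 * radius * Q"
        using Suc.prems(4) radius_ge_1 by simp
      ultimately show ?thesis
        using order_trans by blast
    qed
  qed
qed

lemma dverts_walk_exists:
  assumes "x \<in> dverts n" "y \<in> dverts n"
  shows "\<exists>d. wwalk eps n x y d"
  using walk_le_of_large_gap[OF assms order_refl] by blast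

lemma wdist_le_walk: "wwalk eps n x y d \<Longrightarrow> wdist eps n x y \<le> d"
  unfolding wdist_def by (rule cInf_lower) (auto intro: bdd_belowI walk_length_nonneg)

lemma wdist_le_feature_dist:
  assumes "x \<in> dverts n" "y \<in> dverts n"
  shows "wdist eps n x y \<le> 10 * radius * feature_dist ratio x y"
proof -
  have "\<bar>coord ratio x c - coord ratio y c\<bar> \<le> feature_dist ratio x y" for c
    using abs_feature_diff_le_dist[of ratio x "Some c" y] by simp
  moreover have "\<bar>height x - height y\<bar> \<le> 2 * feature_dist ratio x y"
    using abs_feature_diff_le_dist[of ratio x None y] by (simp add: feature_dist_def)
  ultimately show ?thesis
    using walk_le_feature_gap[OF assms] wdist_le_walk order_trans by blast
qed

definition energy_const :: real where
  "energy_const = 1 / (4 * ratio\<^sup>2 - 1)"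

lemma energy_const_bounds: "0 \<le> energy_const" "1 + energy_const \<le> 4 * ratio\<^sup>2 * energy_const"
proof -
  have "4 * ratio\<^sup>2 = 1 + 4 * eps + 4 * eps\<^sup>2"
    by (simp add: power2_eq_square algebra_simps)
  then have "1 < 4 * ratio\<^sup>2"
    using eps_pos zero_le_power2[of eps] by linarith
  then show "0 \<le> energy_const" "1 + energy_const \<le> 4 * ratio\<^sup>2 * energy_const"
    unfolding energy_const_def by (simp_all add: field_simps)
qed

lemma feature_dist_le_wdist:
  assumes "x \<in> dverts n" "y \<in> dverts n"
  shows "feature_dist ratio x y \<le> sqrt (energy_const + 1) * wdist eps n x y"
proof -
  have "feature_dist ratio x y / sqrt (energy_const + 1) \<le> wdist eps n x y"
    unfolding wdist_def
  proof (rule cInf_greatest)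
    show "{d. wwalk eps n x y d} \<noteq> {}"
      using dverts_walk_exists[OF assms] by blast
    show "feature_dist ratio x y / sqrt (energy_const + 1) \<le> d" if "d \<in> {d. wwalk eps n x y d}" for d
      using feature_dist_le_walk[OF energy_const_bounds, of n x y d] that eps_pos energy_const_bounds(1)
      by (simp add: field_simps)
  qed
  then show ?thesis
    using energy_const_bounds(1) by (simp add: field_simps)
qed

end

theorem mainTheorem12:
  fixes eps :: real
  assumes "0 < eps" and "eps < 1/2"
  shows "\<exists>C::real. \<forall>n::nat. \<exists>f. embeds_with_distortion (dverts n) (wdist eps n) f C"
proof -
  interpret weighted_diamonds eps
    using assms by unfold_locales
  have "embeds_with_distortion (dverts n) (wdist eps n) (\<lambda>x. ell2_encode (feature ratio x))
      (sqrt (energy_const + 1) * (10 * radius))" for n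
    using finite_feature_supp feature_vanishes radius_ge_1 wdist_le_feature_dist feature_dist_le_wdist
    unfolding feature_dist_def by (intro embeds_with_distortion_ell2_encode[where S = feature_supp]) auto
  then show ?thesis
    by blast
qed

end
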